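(* Let $r\ge 2$ and let $H$ be an $r$-uniform hypergraph with maximum degree $\Delta=\Delta(H)$. Then $$\chi_{\nleftrightarrow}(H)\ \le\ \left\lceil r\,\Delta^{1/r}\right\rceil .$$
   Context: For a hypergraph $H$ and a vertex $v$, $E(v)$ denotes the set of edges containing $v$. A local $k$-partition of an $r$-uniform hypergraph $H$ is a collection $\{c_v\}_{v\in V(H)}$ of maps $c_v:E(v)\to\{1,\dots,k\}$. $H$ is conflict $\{c_v\}$-colorable if there is a map $\varphi:V(H)\to\{1,\dots,k\}$ such that no edge $e=\{u_1,\dots,u_r\}$ satisfies $\varphi(u_i)=c_{u_i}(e)$ for all $i=1,\dots,r$. The single conflict chromatic number $\chi_{\nleftrightarrow}(H)$ is the smallest $k$ such that $H$ is conflict $\{c_v\}$-colorable for every local $k$-partition $\{c_v\}$ of $H$. *)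

theory Defs
  imports Complex_Main
begin

definition uniform_hypergraph :: "nat \<Rightarrow> 'a set \<Rightarrow> 'a set set \<Rightarrow> bool" where
  "uniform_hypergraph r V E \<longleftrightarrow> finite V \<and> (\<forall>e\<in>E. e \<subseteq> V \<and> card e = r)"

definition edges_at :: "'a set set \<Rightarrow> 'a \<Rightarrow> 'a set set" where
  "edges_at E v = {e \<in> E. v \<in> e}"

definition hdegree :: "'a set set \<Rightarrow> 'a \<Rightarrow> nat" where
  "hdegree E v = card (edges_at E v)"

definition max_degree :: "'a set \<Rightarrow> 'a set set \<Rightarrow> nat" where
  "max_degree V E = Max (insert 0 (hdegree E ` V))"

text \<open>A local k-partition: for every vertex v a map c v : E(v) \<rightarrow> {1..k}
  (values of c v outside E(v) are irrelevant).\<close>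
definition local_partition :: "nat \<Rightarrow> 'a set \<Rightarrow> 'a set set \<Rightarrow> ('a \<Rightarrow> 'a set \<Rightarrow> nat) \<Rightarrow> bool" where
  "local_partition k V E c \<longleftrightarrow> (\<forall>v\<in>V. \<forall>e\<in>edges_at E v. c v e \<in> {1..k})"

definition conflict_colorable :: "nat \<Rightarrow> 'a set \<Rightarrow> 'a set set \<Rightarrow> ('a \<Rightarrow> 'a set \<Rightarrow> nat) \<Rightarrow> bool" where
  "conflict_colorable k V E c \<longleftrightarrow>
     (\<exists>\<phi>. (\<forall>v\<in>V. \<phi> v \<in> {1..k}) \<and> \<not> (\<exists>e\<in>E. \<forall>u\<in>e. \<phi> u = c u e))"

definition single_conflict_chromatic :: "'a set \<Rightarrow> 'a set set \<Rightarrow> nat" where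
  "single_conflict_chromatic V E =
     (LEAST k. k \<ge> 1 \<and> (\<forall>c. local_partition k V E c \<longrightarrow> conflict_colorable k V E c))"

end

theory Submission
  imports Defs "HOL-Library.FuncSet"
begin

text \<open>Rosenfeld's counting argument. Write \<open>C(S)\<close> for the number of colourings of \<open>S \<subseteq> V\<close>
  with \<open>k\<close> colours in which no edge inside \<open>S\<close> is in conflict, and \<open>\<beta> = \<Delta>\<^bsup>1/r\<^esup>\<close>. By
  induction on \<open>|S|\<close> one shows \<open>C(S \<union> {v}) \<ge> \<beta> C(S)\<close>: of the \<open>k C(S)\<close> extensions of conflict-free
  colourings of \<open>S\<close> to \<open>v\<close>, those in conflict on a given edge \<open>e \<ni> v\<close> are determined by their
  restriction to \<open>S - e\<close>, so there are at most \<open>C(S - e) \<le> \<beta>\<^bsup>1-r\<^esup> C(S)\<close> of them (the induction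
  hypothesis applied \<open>r - 1\<close> times). Summing over the at most \<open>\<Delta> = \<beta>\<^sup>r\<close> edges at \<open>v\<close>, at most
  \<open>\<beta> C(S)\<close> extensions fail, which leaves \<open>(k - \<beta>) C(S) \<ge> \<beta> C(S)\<close> as soon as \<open>k \<ge> 2\<beta>\<close>.
  Hence \<open>C(V) \<ge> \<beta>\<^bsup>|V|\<^esup> > 0\<close>.\<close>

definition conflict :: "('a \<Rightarrow> 'a set \<Rightarrow> nat) \<Rightarrow> ('a \<Rightarrow> nat) \<Rightarrow> 'a set \<Rightarrow> bool" where
  "conflict c \<phi> e \<longleftrightarrow> (\<forall>u\<in>e. \<phi> u = c u e)"

definition conflict_free_colourings ::
    "nat \<Rightarrow> 'a set set \<Rightarrow> ('a \<Rightarrow> 'a set \<Rightarrow> nat) \<Rightarrow> 'a set \<Rightarrow> ('a \<Rightarrow> nat) set" where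
  "conflict_free_colourings k E c S =
     {\<phi> \<in> S \<rightarrow>\<^sub>E {1..k}. \<forall>e\<in>E. e \<subseteq> S \<longrightarrow> \<not> conflict c \<phi> e}"

lemma conflict_free_colourings_subset_PiE: "conflict_free_colourings k E c S \<subseteq> S \<rightarrow>\<^sub>E {1..k}"
  unfolding conflict_free_colourings_def by blast

lemma finite_conflict_free_colourings: "finite S \<Longrightarrow> finite (conflict_free_colourings k E c S)"
  using conflict_free_colourings_subset_PiE finite_PiE finite_subset by (metis finite_atLeastAtMost)

lemma conflict_free_colourings_empty:
  "{} \<notin> E \<Longrightarrow> conflict_free_colourings k E c {} = {\<lambda>_. undefined}"
  unfolding conflict_free_colourings_def by auto

lemma restrict_in_conflict_free_colourings:
  assumes "\<phi> \<in> conflict_free_colourings k E c S" and "T \<subseteq> S"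
  shows "restrict \<phi> T \<in> conflict_free_colourings k E c T"
  using assms unfolding conflict_free_colourings_def conflict_def by (auto simp: PiE_iff subset_eq)

lemma uniform_hypergraph_finite_edges: "uniform_hypergraph r V E \<Longrightarrow> finite E"
  unfolding uniform_hypergraph_def by (meson Pow_iff finite_Pow_iff finite_subset subsetI)

lemma hdegree_le_max_degree: "finite V \<Longrightarrow> v \<in> V \<Longrightarrow> hdegree E v \<le> max_degree V E"
  unfolding max_degree_def by (intro Max_ge) auto

lemma max_degree_pos:
  assumes "uniform_hypergraph r V E" and "r \<ge> 1" and "E \<noteq> {}"
  shows "max_degree V E > 0"
proof -
  obtain e where "e \<in> E" using assms(3) by blast
  with assms(1,2) have "e \<subseteq> V" and "e \<noteq> {}" by (auto simp: uniform_hypergraph_def)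
  then obtain v where "v \<in> e" "v \<in> V" by blast
  have "hdegree E v > 0"
    unfolding hdegree_def edges_at_def
    using \<open>e \<in> E\<close> \<open>v \<in> e\<close> uniform_hypergraph_finite_edges[OF assms(1)] by (auto simp: card_gt_0_iff)
  also have "hdegree E v \<le> max_degree V E"
    using assms(1) \<open>v \<in> V\<close> by (intro hdegree_le_max_degree) (auto simp: uniform_hypergraph_def)
  finally show ?thesis .
qed

lemma power_card_mult_le_of_insert_growth:
  fixes f :: "'a set \<Rightarrow> real"
  assumes "finite D" and "D \<inter> T = {}" and "\<beta> \<ge> 0"
    and "\<And>X w. T \<subseteq> X \<Longrightarrow> X \<subset> T \<union> D \<Longrightarrow> w \<in> D - X \<Longrightarrow> \<beta> * f X \<le> f (insert w X)"
  shows "\<beta> ^ card D * f T \<le> f (T \<union> D)"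
  using assms
proof (induction D rule: finite_induct)
  case empty
  then show ?case by simp
next
  case (insert w D)
  have "\<beta> ^ card D * f T \<le> f (T \<union> D)"
    using insert.prems by (intro insert.IH) auto
  then have "\<beta> ^ card (insert w D) * f T \<le> \<beta> * f (T \<union> D)"
    using insert.hyps \<open>\<beta> \<ge> 0\<close> by (simp add: mult.assoc mult_left_mono)
  also have "\<dots> \<le> f (insert w (T \<union> D))"
    using insert.hyps insert.prems by (intro insert.prems(3)) auto
  finally show ?case by simp
qed

lemma fun_upd_in_conflict_free_colourings:
  assumes "\<phi> \<in> conflict_free_colourings k E c S" and "i \<in> {1..k}"
    and no_conflict: "\<And>e. e \<in> E \<Longrightarrow> v \<in> e \<Longrightarrow> e \<subseteq> insert v S \<Longrightarrow> \<not> conflict c (\<phi>(v := i)) e"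
  shows "\<phi>(v := i) \<in> conflict_free_colourings k E c (insert v S)"
proof -
  have "\<not> conflict c (\<phi>(v := i)) e" if "e \<in> E" "e \<subseteq> insert v S" for e
  proof (cases "v \<in> e")
    case False
    then have "e \<subseteq> S" and "\<forall>u\<in>e. (\<phi>(v := i)) u = \<phi> u" using that(2) by auto
    then show ?thesis
      using assms(1) that(1) unfolding conflict_free_colourings_def conflict_def by auto
  qed (use no_conflict that in blast)
  moreover have "\<phi>(v := i) \<in> insert v S \<rightarrow>\<^sub>E {1..k}"
    using assms(1,2) conflict_free_colourings_subset_PiE by (metis PiE_fun_upd subsetD)
  ultimately show ?thesis unfolding conflict_free_colourings_def by blast
qed

lemma card_conflicting_extensions_le:
  assumes "finite S" and "v \<notin> S" and "v \<in> e"
  shows "card {(i, \<phi>) \<in> {1..k} \<times> conflict_free_colourings k E c S. conflict c (\<phi>(v := i)) e}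
           \<le> card (conflict_free_colourings k E c (S - e))"
proof (rule card_inj_on_le)
  let ?Bad = "{(i, \<phi>) \<in> {1..k} \<times> conflict_free_colourings k E c S. conflict c (\<phi>(v := i)) e}"
  show "inj_on (\<lambda>(i, \<phi>). restrict \<phi> (S - e)) ?Bad"
  proof (rule inj_onI)
    fix p q assume "p \<in> ?Bad" "q \<in> ?Bad"
      and eq: "(\<lambda>(i, \<phi>). restrict \<phi> (S - e)) p = (\<lambda>(i, \<phi>). restrict \<phi> (S - e)) q"
    then obtain i \<phi> j \<psi> where pq: "p = (i, \<phi>)" "q = (j, \<psi>)"
      and conflicts: "conflict c (\<phi>(v := i)) e" "conflict c (\<psi>(v := j)) e"
      and PiE: "\<phi> \<in> S \<rightarrow>\<^sub>E {1..k}" "\<psi> \<in> S \<rightarrow>\<^sub>E {1..k}"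
      and restrict_eq: "restrict \<phi> (S - e) = restrict \<psi> (S - e)"
      using conflict_free_colourings_subset_PiE by fastforce
    have "\<phi> = \<psi>"
    proof
      fix x
      consider "x \<in> e - {v}" | "x \<in> S - e" | "x \<notin> S"
        using assms(2) by blast
      then show "\<phi> x = \<psi> x"
      proof cases
        case 1
        then have "x \<in> e" "x \<noteq> v" by auto
        then show ?thesis using conflicts unfolding conflict_def by (metis fun_upd_other)
      next
        case 2
        then show ?thesis using fun_cong[OF restrict_eq, of x] by simp
      next
        case 3
        then show ?thesis using PiE_arb[OF PiE(1) 3] PiE_arb[OF PiE(2) 3] by simp
      qed
    qed
    moreover have "i = j"
      using conflicts \<open>v \<in> e\<close> unfolding conflict_def by (metis fun_upd_same)
    ultimately show "p = q" using pq by simp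
  qed
  show "(\<lambda>(i, \<phi>). restrict \<phi> (S - e)) ` ?Bad \<subseteq> conflict_free_colourings k E c (S - e)"
  proof (rule image_subsetI)
    fix p assume "p \<in> ?Bad"
    then obtain i \<phi> where "p = (i, \<phi>)" "\<phi> \<in> conflict_free_colourings k E c S" by blast
    then show "(\<lambda>(i, \<phi>). restrict \<phi> (S - e)) p \<in> conflict_free_colourings k E c (S - e)"
      by (simp add: restrict_in_conflict_free_colourings)
  qed
  show "finite (conflict_free_colourings k E c (S - e))"
    using assms(1) by (simp add: finite_conflict_free_colourings)
qed

lemma mult_card_conflict_free_colourings_le:
  assumes "finite S" and "v \<notin> S" and "finite E"
  shows "k * card (conflict_free_colourings k E c S)
           \<le> card (conflict_free_colourings k E c (insert v S))
             + (\<Sum>e\<in>{e \<in> E. v \<in> e \<and> e \<subseteq> insert v S}.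
                  card {(i, \<phi>) \<in> {1..k} \<times> conflict_free_colourings k E c S. conflict c (\<phi>(v := i)) e})"
proof -
  let ?Ext = "{1..k} \<times> conflict_free_colourings k E c S"
  let ?Good = "{(i, \<phi>) \<in> ?Ext. \<phi>(v := i) \<in> conflict_free_colourings k E c (insert v S)}"
  let ?Bad = "\<lambda>e. {(i, \<phi>) \<in> ?Ext. conflict c (\<phi>(v := i)) e}"
  let ?Ev = "{e \<in> E. v \<in> e \<and> e \<subseteq> insert v S}"
  have finite_Ext: "finite ?Ext"
    using assms(1) by (simp add: finite_conflict_free_colourings)
  have "?Ext \<subseteq> ?Good \<union> (\<Union>e\<in>?Ev. ?Bad e)"
    using fun_upd_in_conflict_free_colourings by fast
  moreover have "finite (?Good \<union> (\<Union>e\<in>?Ev. ?Bad e))"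
    by (rule finite_subset[OF _ finite_Ext]) blast
  ultimately have "card ?Ext \<le> card (?Good \<union> (\<Union>e\<in>?Ev. ?Bad e))"
    by (rule card_mono[rotated])
  also have "\<dots> \<le> card ?Good + card (\<Union>e\<in>?Ev. ?Bad e)"
    by (rule card_Un_le)
  finally have "card ?Ext \<le> card ?Good + card (\<Union>e\<in>?Ev. ?Bad e)" .
  moreover have "card ?Good \<le> card (conflict_free_colourings k E c (insert v S))"
  proof (rule card_inj_on_le)
    have "inj_on (\<lambda>(i, \<phi>). \<phi>(v := i)) ({1..k} \<times> (S \<rightarrow>\<^sub>E {1..k}))"
      using inj_combinator[OF assms(2), of "\<lambda>_. {1..k}"] by simp
    then show "inj_on (\<lambda>(i, \<phi>). \<phi>(v := i)) ?Good"
      by (rule inj_on_subset) (use conflict_free_colourings_subset_PiE in blast)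
    show "(\<lambda>(i, \<phi>). \<phi>(v := i)) ` ?Good \<subseteq> conflict_free_colourings k E c (insert v S)"
      by auto
    show "finite (conflict_free_colourings k E c (insert v S))"
      using assms(1) by (simp add: finite_conflict_free_colourings)
  qed
  moreover have "card (\<Union>e\<in>?Ev. ?Bad e) \<le> (\<Sum>e\<in>?Ev. card (?Bad e))"
    using assms(3) by (intro card_UN_le) simp
  moreover have "card ?Ext = k * card (conflict_free_colourings k E c S)"
    by (simp add: card_cartesian_product)
  ultimately show ?thesis by linarith
qed

lemma card_conflicting_extensions_le_of_growth:
  fixes \<beta> :: real
  assumes "finite S" and "v \<notin> S" and "v \<in> e" and "e \<subseteq> insert v S" and "0 < \<beta>"
    and growth: "\<And>X w. X \<subset> S \<Longrightarrow> w \<in> S - X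
                   \<Longrightarrow> \<beta> * card (conflict_free_colourings k E c X)
                         \<le> card (conflict_free_colourings k E c (insert w X))"
  shows "\<beta> ^ card e * card {(i, \<phi>) \<in> {1..k} \<times> conflict_free_colourings k E c S. conflict c (\<phi>(v := i)) e}
           \<le> \<beta> * card (conflict_free_colourings k E c S)"
proof -
  let ?C = "\<lambda>S. real (card (conflict_free_colourings k E c S))"
  let ?Bad = "{(i, \<phi>) \<in> {1..k} \<times> conflict_free_colourings k E c S. conflict c (\<phi>(v := i)) e}"
  have "S \<inter> e = e - {v}" and "finite e"
    using assms(1-4) finite_subset by auto
  then have power_card_e: "\<beta> ^ card e = \<beta> * \<beta> ^ card (S \<inter> e)"
    using \<open>v \<in> e\<close> by (metis card_Suc_Diff1 power_Suc)
  have "\<beta> ^ card (S \<inter> e) * ?C (S - e) \<le> ?C ((S - e) \<union> (S \<inter> e))"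
    by (rule power_card_mult_le_of_insert_growth) (use assms in \<open>auto intro: growth\<close>)
  moreover have "(S - e) \<union> (S \<inter> e) = S" by blast
  ultimately have growth_S: "\<beta> ^ card (S \<inter> e) * ?C (S - e) \<le> ?C S" by simp
  have "\<beta> ^ card e * card ?Bad = \<beta> * (\<beta> ^ card (S \<inter> e) * card ?Bad)"
    by (simp add: power_card_e)
  also have "\<dots> \<le> \<beta> * (\<beta> ^ card (S \<inter> e) * ?C (S - e))"
    using card_conflicting_extensions_le[OF assms(1-3)] \<open>0 < \<beta>\<close> by (intro mult_left_mono) auto
  also have "\<dots> \<le> \<beta> * ?C S"
    using growth_S \<open>0 < \<beta>\<close> by simp
  finally show ?thesis .
qed

lemma conflict_free_colourings_insert_growth:
  assumes unif: "uniform_hypergraph r V E"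
    and "0 < \<beta>" and degree: "real (max_degree V E) \<le> \<beta> ^ r" and colours: "2 * \<beta> \<le> real k"
  shows "S \<subseteq> V \<Longrightarrow> v \<in> V - S
           \<Longrightarrow> \<beta> * card (conflict_free_colourings k E c S)
                 \<le> card (conflict_free_colourings k E c (insert v S))"
proof (induction "card S" arbitrary: S v rule: less_induct)
  case less
  let ?C = "\<lambda>S. real (card (conflict_free_colourings k E c S))"
  let ?Bad = "\<lambda>e. {(i, \<phi>) \<in> {1..k} \<times> conflict_free_colourings k E c S. conflict c (\<phi>(v := i)) e}"
  let ?Ev = "{e \<in> E. v \<in> e \<and> e \<subseteq> insert v S}"
  have "finite V" and "finite E"
    using unif uniform_hypergraph_finite_edges by (auto simp: uniform_hypergraph_def)
  then have "finite S" using less.prems(1) finite_subset by blast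
  have "\<beta> ^ r * card (?Bad e) \<le> \<beta> * ?C S" if "e \<in> ?Ev" for e
  proof -
    have "card e = r"
      using that unif by (auto simp: uniform_hypergraph_def)
    moreover have "\<beta> ^ card e * card (?Bad e) \<le> \<beta> * ?C S"
    proof (rule card_conflicting_extensions_le_of_growth)
      fix X w assume "X \<subset> S" and "w \<in> S - X"
      then show "\<beta> * ?C X \<le> ?C (insert w X)"
        using less.prems(1) \<open>finite S\<close> by (intro less.hyps) (auto intro: psubset_card_mono)
    qed (use that less.prems(2) \<open>finite S\<close> \<open>0 < \<beta>\<close> in auto)
    ultimately show ?thesis by simp
  qed
  then have "\<beta> ^ r * (\<Sum>e\<in>?Ev. real (card (?Bad e))) \<le> (\<Sum>e\<in>?Ev. \<beta> * ?C S)"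
    unfolding sum_distrib_left by (intro sum_mono) auto
  also have "\<dots> = card ?Ev * (\<beta> * ?C S)" by simp
  also have "\<dots> \<le> \<beta> ^ r * (\<beta> * ?C S)"
  proof -
    have "card ?Ev \<le> hdegree E v"
      unfolding hdegree_def edges_at_def using \<open>finite E\<close> by (intro card_mono) auto
    also have "\<dots> \<le> max_degree V E"
      using \<open>finite V\<close> less.prems(2) by (intro hdegree_le_max_degree) auto
    finally show ?thesis
      using degree \<open>0 < \<beta>\<close> by (intro mult_right_mono) auto
  qed
  finally have bad_total: "(\<Sum>e\<in>?Ev. real (card (?Bad e))) \<le> \<beta> * ?C S"
    using \<open>0 < \<beta>\<close> by simp
  have "k * card (conflict_free_colourings k E c S)
          \<le> card (conflict_free_colourings k E c (insert v S)) + (\<Sum>e\<in>?Ev. card (?Bad e))"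
    using \<open>finite S\<close> less.prems(2) \<open>finite E\<close> by (intro mult_card_conflict_free_colourings_le) auto
  then have "real k * ?C S \<le> ?C (insert v S) + (\<Sum>e\<in>?Ev. real (card (?Bad e)))"
    unfolding of_nat_mult[symmetric] of_nat_sum[symmetric] of_nat_add[symmetric] by (rule of_nat_mono)
  moreover have "2 * \<beta> * ?C S \<le> real k * ?C S"
    using colours by (intro mult_right_mono) auto
  ultimately show ?case using bad_total by linarith
qed

lemma conflict_colorable_if_degree_le_power:
  assumes unif: "uniform_hypergraph r V E" and "r \<ge> 1"
    and "0 < \<beta>" and "real (max_degree V E) \<le> \<beta> ^ r" and "2 * \<beta> \<le> real k"
  shows "conflict_colorable k V E c"
proof -
  let ?C = "\<lambda>S. real (card (conflict_free_colourings k E c S))"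
  have "finite V" and edges: "\<forall>e\<in>E. e \<subseteq> V \<and> card e = r"
    using unif by (auto simp: uniform_hypergraph_def)
  have "\<beta> ^ card V * ?C {} \<le> ?C ({} \<union> V)"
  proof (rule power_card_mult_le_of_insert_growth)
    fix X w assume "X \<subset> {} \<union> V" and "w \<in> V - X"
    then show "\<beta> * ?C X \<le> ?C (insert w X)"
      using conflict_free_colourings_insert_growth[OF assms(1,3-5)] by blast
  qed (use \<open>finite V\<close> \<open>0 < \<beta>\<close> in auto)
  moreover have "{} \<notin> E"
    using edges \<open>r \<ge> 1\<close> by fastforce
  then have "?C {} = 1"
    by (simp add: conflict_free_colourings_empty)
  ultimately have "0 < ?C V"
    using \<open>0 < \<beta>\<close> by (metis Un_empty_left mult.right_neutral zero_less_power less_le_trans)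
  then obtain \<phi> where "\<phi> \<in> conflict_free_colourings k E c V"
    by (metis card.empty equals0I of_nat_0 order.irrefl)
  then have "\<phi> \<in> V \<rightarrow>\<^sub>E {1..k}" and "\<forall>e\<in>E. \<not> conflict c \<phi> e"
    using edges by (auto simp: conflict_free_colourings_def)
  then show ?thesis
    unfolding conflict_colorable_def conflict_def by (intro exI[of _ \<phi>]) (auto simp: PiE_iff)
qed

theorem proposition2p2:
  fixes r :: nat and V :: "'a set" and E :: "'a set set"
  assumes "r \<ge> 2"
    and "uniform_hypergraph r V E"
    and "E \<noteq> {}"
  shows "real (single_conflict_chromatic V E)
           \<le> real_of_int \<lceil>real r * real (max_degree V E) powr (1 / real r)\<rceil>"
proof -
  define \<beta> where "\<beta> = real (max_degree V E) powr (1 / real r)"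
  define k where "k = nat \<lceil>real r * \<beta>\<rceil>"
  have "max_degree V E > 0"
    using assms by (intro max_degree_pos[of r]) auto
  then have "0 < \<beta>" and "\<beta> ^ r = real (max_degree V E)"
    using assms(1) by (simp_all add: \<beta>_def powr_realpow[symmetric] powr_powr)
  have "2 * \<beta> \<le> real r * \<beta>"
    using assms(1) \<open>0 < \<beta>\<close> by simp
  then have k: "real k = real_of_int \<lceil>real r * \<beta>\<rceil>" and "2 * \<beta> \<le> real k"
    unfolding k_def using \<open>0 < \<beta>\<close> by linarith+
  then have "k \<ge> 1"
    using \<open>0 < \<beta>\<close> by linarith
  moreover have "conflict_colorable k V E c" for c
    using assms(1,2) \<open>0 < \<beta>\<close> \<open>\<beta> ^ r = real (max_degree V E)\<close> \<open>2 * \<beta> \<le> real k\<close>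
    by (intro conflict_colorable_if_degree_le_power) auto
  ultimately have "single_conflict_chromatic V E \<le> k"
    unfolding single_conflict_chromatic_def by (intro Least_le) blast
  then show ?thesis
    using k by (simp add: \<beta>_def)
qed

end
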